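(* Consider the balanced regret multi-representative selection problem \[\min_{\pmb x\in\mathcal X}\ \max_{\pmb\delta\in\Delta(\Gamma),\,\pmb y\in\mathcal X}\ \min_{\pmb\epsilon\in\Delta(\Gamma')}\ \sum_{i\in[n]}(\hat c_i+d_i\delta_i+d_i\epsilon_i)(x_i-y_i),\quad \mathcal X=\Big\{\pmb x\in\{0,1\}^n:\sum_{i\in T_\ell}x_i=p_\ell\ \forall\ell\in[L]\Big\}.\] Let $\ell\in[L]$ and let $i,j\in T_\ell$ be two items with $\hat c_i\le\hat c_j$ and $\hat c_i+d_i\le\hat c_j+d_j$. Then there is an optimal solution $\pmb x$ with $x_i\ge x_j$.
   Context: $[n]=\{1,\dots,n\}$; $T_1\cup\dots\cup T_L=[n]$ is a partition and $p_\ell\le|T_\ell|$ are integers; $\hat c_i\ge0$, $d_i\ge0$; $\Gamma,\Gamma'\ge0$ are integers and $\Delta(k)=\{\pmb\delta\in\{0,1\}^n:\sum_i\delta_i\le k\}$. *)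

theory Defs
  imports Complex_Main
begin

text \<open>Vectors in {0,1}^n are modelled as functions nat => real that take
  values in {0,1} on {1..n} and vanish outside {1..n}.\<close>

definition binvecs :: "nat \<Rightarrow> (nat \<Rightarrow> real) set" where
  "binvecs n = {x. (\<forall>i\<in>{1..n}. x i = 0 \<or> x i = 1) \<and> (\<forall>i. i \<notin> {1..n} \<longrightarrow> x i = 0)}"

definition Delta :: "nat \<Rightarrow> nat \<Rightarrow> (nat \<Rightarrow> real) set" where
  "Delta n k = {\<delta> \<in> binvecs n. (\<Sum>i\<in>{1..n}. \<delta> i) \<le> real k}"

definition feasX :: "nat \<Rightarrow> nat \<Rightarrow> (nat \<Rightarrow> nat set) \<Rightarrow> (nat \<Rightarrow> nat) \<Rightarrow> (nat \<Rightarrow> real) set" where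
  "feasX n L T p = {x \<in> binvecs n. \<forall>l\<in>{1..L}. (\<Sum>i\<in>T l. x i) = real (p l)}"

definition regret_obj ::
  "nat \<Rightarrow> nat \<Rightarrow> (nat \<Rightarrow> nat set) \<Rightarrow> (nat \<Rightarrow> nat) \<Rightarrow> (nat \<Rightarrow> real) \<Rightarrow> (nat \<Rightarrow> real)
    \<Rightarrow> nat \<Rightarrow> nat \<Rightarrow> (nat \<Rightarrow> real) \<Rightarrow> real" where
  "regret_obj n L T p c d \<Gamma> \<Gamma>' x =
     Max ((\<lambda>(\<delta>, y). Min ((\<lambda>\<epsilon>. \<Sum>i\<in>{1..n}. (c i + d i * \<delta> i + d i * \<epsilon> i) * (x i - y i))
                              ` Delta n \<Gamma>'))
          ` (Delta n \<Gamma> \<times> feasX n L T p))"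

end

theory Submission
  imports Defs "HOL-Combinatorics.Permutations"
begin

text \<open>Let \<open>x\<close> be optimal. If \<open>x\<^sub>i = 0\<close> and \<open>x\<^sub>j = 1\<close>, swap the two entries; since
  \<open>i, j\<close> lie in the same class \<open>T\<^sub>l\<close>, the result \<open>x'\<close> is again feasible. Against \<open>x'\<close>, any
  adversary choice \<open>(\<delta>, y)\<close> is matched against \<open>x\<close> by swapping \<open>y\<^sub>i, y\<^sub>j\<close> and moving \<open>\<delta>\<^sub>i\<close> to
  position \<open>j\<close> (zero at \<open>i\<close>, which keeps \<open>\<delta>\<close> in \<open>\<Delta>(\<Gamma>)\<close>); every inner response \<open>\<epsilon>\<close> to the latter is answered by moving \<open>\<epsilon>\<^sub>i\<close> to
  position \<open>j\<close>. Term by term the regret of \<open>x'\<close> is then no larger, because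
  \<open>c\<^sub>i + d\<^sub>i t \<le> c\<^sub>j + d\<^sub>j t\<close> for \<open>t \<in> {0, 1}\<close>.\<close>

definition regret_sum ::
  "nat \<Rightarrow> (nat \<Rightarrow> real) \<Rightarrow> (nat \<Rightarrow> real) \<Rightarrow> (nat \<Rightarrow> real) \<Rightarrow> (nat \<Rightarrow> real) \<Rightarrow> (nat \<Rightarrow> real)
    \<Rightarrow> (nat \<Rightarrow> real) \<Rightarrow> real" where
  "regret_sum n c d x \<delta> y \<epsilon> = (\<Sum>k\<in>{1..n}. (c k + d k * \<delta> k + d k * \<epsilon> k) * (x k - y k))"

lemma regret_obj_eq:
  "regret_obj n L T p c d \<Gamma> \<Gamma>' x =
     Max ((\<lambda>(\<delta>, y). Min (regret_sum n c d x \<delta> y ` Delta n \<Gamma>')) ` (Delta n \<Gamma> \<times> feasX n L T p))"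
  unfolding regret_obj_def regret_sum_def ..

lemma Max_Min_mono:
  fixes \<phi> \<psi> :: "'a \<Rightarrow> 'b \<Rightarrow> 'c::linorder"
  assumes A: "finite A" "A \<noteq> {}" and B: "finite B" "B \<noteq> {}"
    and dom: "\<And>a. a \<in> A \<Longrightarrow> \<exists>a'\<in>A. \<forall>b'\<in>B. \<exists>b\<in>B. \<phi> a b \<le> \<psi> a' b'"
  shows "Max ((\<lambda>a. Min (\<phi> a ` B)) ` A) \<le> Max ((\<lambda>a. Min (\<psi> a ` B)) ` A)"
proof (rule Max.boundedI)
  show "finite ((\<lambda>a. Min (\<phi> a ` B)) ` A)" and "(\<lambda>a. Min (\<phi> a ` B)) ` A \<noteq> {}"
    using A by simp_all
next
  fix m assume "m \<in> (\<lambda>a. Min (\<phi> a ` B)) ` A"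
  then obtain a where "a \<in> A" and m: "m = Min (\<phi> a ` B)" by blast
  obtain a' where "a' \<in> A" and a': "\<forall>b'\<in>B. \<exists>b\<in>B. \<phi> a b \<le> \<psi> a' b'"
    using dom[OF \<open>a \<in> A\<close>] by blast
  have "m \<le> \<psi> a' b'" if "b' \<in> B" for b'
  proof -
    from a' \<open>b' \<in> B\<close> obtain b where "b \<in> B" and "\<phi> a b \<le> \<psi> a' b'"
      by blast
    moreover have "m \<le> \<phi> a b"
      using B(1) \<open>b \<in> B\<close> m by simp
    ultimately show ?thesis by simp
  qed
  then have "m \<le> Min (\<psi> a' ` B)"
    using B by simp
  also have "\<dots> \<le> Max ((\<lambda>a. Min (\<psi> a ` B)) ` A)"
    using \<open>a' \<in> A\<close> A(1) by simp
  finally show "m \<le> Max ((\<lambda>a. Min (\<psi> a ` B)) ` A)" .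
qed

lemma binvecs_01: "x \<in> binvecs n \<Longrightarrow> k \<in> {1..n} \<Longrightarrow> x k = 0 \<or> x k = 1"
  unfolding binvecs_def by auto

lemma finite_binvecs: "finite (binvecs n)"
proof (rule finite_subset)
  show "binvecs n \<subseteq> (\<lambda>S k. of_bool (k \<in> S)) ` Pow {1..n}"
  proof
    fix x assume x: "x \<in> binvecs n"
    have "x = (\<lambda>k. of_bool (k \<in> {k\<in>{1..n}. x k = 1}))"
      using x unfolding binvecs_def by (auto simp: fun_eq_iff)
    then show "x \<in> (\<lambda>S k. of_bool (k \<in> S)) ` Pow {1..n}" by blast
  qed
qed simp

lemma Delta_subset_binvecs: "Delta n k \<subseteq> binvecs n"
  unfolding Delta_def by blast

lemma feasX_subset_binvecs: "feasX n L T p \<subseteq> binvecs n"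
  unfolding feasX_def by blast

lemma finite_Delta: "finite (Delta n k)"
  unfolding Delta_def using finite_binvecs by simp

lemma Delta_nonempty: "Delta n k \<noteq> {}"
proof -
  have "(\<lambda>_. 0) \<in> Delta n k"
    unfolding Delta_def binvecs_def by simp
  then show ?thesis by blast
qed

lemma finite_feasX: "finite (feasX n L T p)"
  unfolding feasX_def using finite_binvecs by simp

lemma Delta_move:
  assumes \<delta>: "\<delta> \<in> Delta n k" and "i \<in> {1..n}" "j \<in> {1..n}"
  shows "\<delta>(i := 0, j := \<delta> i) \<in> Delta n k"
proof -
  have bin: "\<delta> \<in> binvecs n" and le: "(\<Sum>m\<in>{1..n}. \<delta> m) \<le> real k"
    using \<delta> unfolding Delta_def by auto
  have "(\<Sum>m\<in>{1..n}. (\<delta>(i := 0, j := \<delta> i)) m) \<le> (\<Sum>m\<in>{1..n}. (\<delta> \<circ> transpose i j) m)"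
    using assms(2,3) binvecs_01[OF bin] by (intro sum_mono) (fastforce simp: transpose_def)
  also have "\<dots> = (\<Sum>m\<in>{1..n}. \<delta> m)"
    using sum.permute[OF permutes_swap_id[OF assms(2,3)], of \<delta>] by simp
  finally show ?thesis
    using bin le assms(2,3) unfolding Delta_def binvecs_def by auto
qed

lemma feasX_comp_permutes:
  assumes \<pi>: "\<pi> permutes {1..n}" and T: "\<forall>k\<in>{1..L}. \<pi> ` T k = T k"
    and x: "x \<in> feasX n L T p"
  shows "x \<circ> \<pi> \<in> feasX n L T p"
proof -
  have "x \<circ> \<pi> \<in> binvecs n"
    using x \<pi> unfolding feasX_def binvecs_def
    by (auto simp: permutes_in_image permutes_not_in)
  moreover have "(\<Sum>m\<in>T k. (x \<circ> \<pi>) m) = real (p k)" if "k \<in> {1..L}" for k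
  proof -
    have "(\<Sum>m\<in>T k. (x \<circ> \<pi>) m) = (\<Sum>m\<in>\<pi> ` T k. x m)"
      using permutes_inj[OF \<pi>] by (simp add: sum.reindex inj_on_subset)
    then show ?thesis
      using T x that unfolding feasX_def by simp
  qed
  ultimately show ?thesis
    unfolding feasX_def by simp
qed

lemma feasX_comp_transpose:
  assumes T_sub: "\<forall>k\<in>{1..L}. T k \<subseteq> {1..n}"
    and T_disj: "\<forall>k\<in>{1..L}. \<forall>k'\<in>{1..L}. k \<noteq> k' \<longrightarrow> T k \<inter> T k' = {}"
    and l: "l \<in> {1..L}" and i: "i \<in> T l" and j: "j \<in> T l"
    and x: "x \<in> feasX n L T p"
  shows "x \<circ> transpose i j \<in> feasX n L T p"
proof (rule feasX_comp_permutes[OF _ _ x])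
  show "transpose i j permutes {1..n}"
    using T_sub l i j by (intro permutes_swap_id) blast+
  show "\<forall>k\<in>{1..L}. transpose i j ` T k = T k"
  proof
    fix k assume k: "k \<in> {1..L}"
    have "i \<in> T k \<longleftrightarrow> j \<in> T k"
    proof (cases "k = l")
      case False
      then have "T k \<inter> T l = {}"
        using T_disj k l by blast
      with i j show ?thesis by blast
    qed (use i j in simp)
    then show "transpose i j ` T k = T k"
      by (rule transpose_image_eq)
  qed
qed

lemma feasX_nonempty:
  assumes T_sub: "\<forall>k\<in>{1..L}. T k \<subseteq> {1..n}"
    and T_disj: "\<forall>k\<in>{1..L}. \<forall>k'\<in>{1..L}. k \<noteq> k' \<longrightarrow> T k \<inter> T k' = {}"
    and p_le: "\<forall>k\<in>{1..L}. p k \<le> card (T k)"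
  shows "feasX n L T p \<noteq> {}"
proof -
  have "\<forall>k\<in>{1..L}. \<exists>S. S \<subseteq> T k \<and> card S = p k"
    using p_le obtain_subset_with_card_n by metis
  then obtain S where S: "\<forall>k\<in>{1..L}. S k \<subseteq> T k \<and> card (S k) = p k"
    by (rule bchoice[elim_format]) blast
  define U where "U = (\<Union>k\<in>{1..L}. S k)"
  have "(\<Sum>m\<in>T k. of_bool (m \<in> U)) = real (p k)" if k: "k \<in> {1..L}" for k
  proof -
    have "T k \<inter> U = S k"
    proof
      show "T k \<inter> U \<subseteq> S k"
      proof
        fix m assume "m \<in> T k \<inter> U"
        then obtain k' where k': "k' \<in> {1..L}" "m \<in> S k'" and "m \<in> T k"
          unfolding U_def by blast
        moreover have "m \<in> T k'"
          using S k' by blast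
        ultimately have "k' = k"
          using T_disj k by blast
        with k' show "m \<in> S k" by simp
      qed
    qed (use S k in \<open>auto simp: U_def\<close>)
    moreover have "finite (T k)"
      using T_sub k finite_subset by blast
    ultimately show ?thesis
      using S k by simp
  qed
  moreover have "U \<subseteq> {1..n}"
    using S T_sub unfolding U_def by blast
  ultimately have "(\<lambda>m. of_bool (m \<in> U)) \<in> feasX n L T p"
    unfolding feasX_def binvecs_def by auto
  then show ?thesis by blast
qed

lemma feasX_has_minimizer:
  fixes f :: "(nat \<Rightarrow> real) \<Rightarrow> 'a::linorder"
  assumes "\<forall>k\<in>{1..L}. T k \<subseteq> {1..n}"
    and "\<forall>k\<in>{1..L}. \<forall>k'\<in>{1..L}. k \<noteq> k' \<longrightarrow> T k \<inter> T k' = {}"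
    and "\<forall>k\<in>{1..L}. p k \<le> card (T k)"
  shows "\<exists>x\<in>feasX n L T p. \<forall>x'\<in>feasX n L T p. f x \<le> f x'"
proof -
  note X = finite_feasX feasX_nonempty[OF assms]
  show ?thesis
    using arg_min_if_finite(1)[OF X] arg_min_least[OF X] by blast
qed

lemma regret_sum_transpose_le:
  assumes i: "i \<in> {1..n}" and j: "j \<in> {1..n}" and x: "x i = 0" "x j = 1"
    and cij: "c i \<le> c j" and cdij: "c i + d i \<le> c j + d j" and dj: "d j \<ge> 0"
    and \<delta>: "\<delta> \<in> binvecs n" and y: "y \<in> binvecs n" and \<epsilon>: "\<epsilon> \<in> binvecs n"
  shows "regret_sum n c d (x \<circ> transpose i j) \<delta> y (\<epsilon>(i := 0, j := \<epsilon> i))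
           \<le> regret_sum n c d x (\<delta>(i := 0, j := \<delta> i)) (y \<circ> transpose i j) \<epsilon>"
proof -
  let ?\<tau> = "transpose i j" and ?\<delta>' = "\<delta>(i := 0, j := \<delta> i)" and ?\<epsilon>' = "\<epsilon>(i := 0, j := \<epsilon> i)"
  have "i \<noteq> j" using x by auto
  have "(c k + d k * \<delta> k + d k * ?\<epsilon>' k) * ((x \<circ> ?\<tau>) k - y k)
          \<le> (c (?\<tau> k) + d (?\<tau> k) * ?\<delta>' (?\<tau> k) + d (?\<tau> k) * \<epsilon> (?\<tau> k)) * ((x \<circ> ?\<tau>) k - y k)"
    for k
  proof -
    consider "k = i" | "k = j" | "k \<noteq> i" "k \<noteq> j" by blast
    then show ?thesis
    proof cases
      case 1
      have "c i + d i * \<delta> i \<le> c j + d j * \<delta> i + d j * \<epsilon> j"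
        using binvecs_01[OF \<delta> i] binvecs_01[OF \<epsilon> j] cij cdij dj by auto
      moreover have "y i \<le> 1"
        using binvecs_01[OF y i] by auto
      ultimately show ?thesis
        using 1 x \<open>i \<noteq> j\<close> by (simp add: mult_right_mono)
    next
      case 2
      have "c i + d i * \<epsilon> i \<le> c j + d j * \<delta> j + d j * \<epsilon> i"
        using binvecs_01[OF \<delta> j] binvecs_01[OF \<epsilon> i] cij cdij dj by auto
      moreover have "y j \<ge> 0"
        using binvecs_01[OF y j] by auto
      ultimately show ?thesis
        using 2 x \<open>i \<noteq> j\<close> by (simp add: mult_right_mono)
    next
      case 3
      then show ?thesis by simp
    qed
  qed
  then have "regret_sum n c d (x \<circ> ?\<tau>) \<delta> y ?\<epsilon>'
      \<le> (\<Sum>k\<in>{1..n}. (c (?\<tau> k) + d (?\<tau> k) * ?\<delta>' (?\<tau> k) + d (?\<tau> k) * \<epsilon> (?\<tau> k)) * (x (?\<tau> k) - y k))"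
    unfolding regret_sum_def by (intro sum_mono) simp
  also have "\<dots> = regret_sum n c d x ?\<delta>' (y \<circ> ?\<tau>) \<epsilon>"
    unfolding regret_sum_def
    using sum.permute[OF permutes_swap_id[OF i j],
        of "\<lambda>k. (c k + d k * ?\<delta>' k + d k * \<epsilon> k) * (x k - y (?\<tau> k))"]
    by simp
  finally show ?thesis .
qed

lemma regret_obj_transpose_le:
  assumes T_sub: "\<forall>k\<in>{1..L}. T k \<subseteq> {1..n}"
    and T_disj: "\<forall>k\<in>{1..L}. \<forall>k'\<in>{1..L}. k \<noteq> k' \<longrightarrow> T k \<inter> T k' = {}"
    and l: "l \<in> {1..L}" and i: "i \<in> T l" and j: "j \<in> T l"
    and cij: "c i \<le> c j" and cdij: "c i + d i \<le> c j + d j" and dj: "d j \<ge> 0"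
    and x: "x \<in> feasX n L T p" "x i = 0" "x j = 1"
  shows "regret_obj n L T p c d \<Gamma> \<Gamma>' (x \<circ> transpose i j) \<le> regret_obj n L T p c d \<Gamma> \<Gamma>' x"
proof -
  let ?\<tau> = "transpose i j" and ?X = "feasX n L T p"
  have i': "i \<in> {1..n}" and j': "j \<in> {1..n}"
    using T_sub l i j by blast+
  have \<tau>_X: "y \<circ> ?\<tau> \<in> ?X" if "y \<in> ?X" for y
    using feasX_comp_transpose[OF T_sub T_disj l i j that] .
  have "\<exists>a'\<in>Delta n \<Gamma> \<times> ?X. \<forall>\<epsilon>\<in>Delta n \<Gamma>'. \<exists>\<epsilon>'\<in>Delta n \<Gamma>'.
          case_prod (regret_sum n c d (x \<circ> ?\<tau>)) a \<epsilon>' \<le> case_prod (regret_sum n c d x) a' \<epsilon>"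
    if a_in: "a \<in> Delta n \<Gamma> \<times> ?X" for a
  proof -
    from a_in obtain \<delta> y where a: "a = (\<delta>, y)" and \<delta>: "\<delta> \<in> Delta n \<Gamma>" and y: "y \<in> ?X"
      by blast
    show ?thesis
    proof (intro bexI ballI)
      fix \<epsilon> assume \<epsilon>: "\<epsilon> \<in> Delta n \<Gamma>'"
      show "\<epsilon>(i := 0, j := \<epsilon> i) \<in> Delta n \<Gamma>'"
        using Delta_move[OF \<epsilon> i' j'] .
      show "case_prod (regret_sum n c d (x \<circ> ?\<tau>)) a (\<epsilon>(i := 0, j := \<epsilon> i))
          \<le> case_prod (regret_sum n c d x) (\<delta>(i := 0, j := \<delta> i), y \<circ> ?\<tau>) \<epsilon>"
      proof -
        have "\<delta> \<in> binvecs n" "y \<in> binvecs n" "\<epsilon> \<in> binvecs n"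
          using \<delta> y \<epsilon> Delta_subset_binvecs feasX_subset_binvecs by blast+
        then show ?thesis
          using regret_sum_transpose_le[OF i' j' x(2,3) cij cdij dj] a by simp
      qed
    next
      show "(\<delta>(i := 0, j := \<delta> i), y \<circ> ?\<tau>) \<in> Delta n \<Gamma> \<times> ?X"
        using Delta_move[OF \<delta> i' j'] \<tau>_X[OF y] by simp
    qed
  qed
  then have "Max ((\<lambda>a. Min (case_prod (regret_sum n c d (x \<circ> ?\<tau>)) a ` Delta n \<Gamma>')) ` (Delta n \<Gamma> \<times> ?X))
      \<le> Max ((\<lambda>a. Min (case_prod (regret_sum n c d x) a ` Delta n \<Gamma>')) ` (Delta n \<Gamma> \<times> ?X))"
    using x(1) Delta_nonempty finite_Delta finite_feasX by (intro Max_Min_mono) auto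
  then show ?thesis
    by (simp add: regret_obj_eq case_prod_unfold)
qed

theorem lemma7:
  fixes n L :: nat and T :: "nat \<Rightarrow> nat set" and p :: "nat \<Rightarrow> nat"
    and c d :: "nat \<Rightarrow> real" and \<Gamma> \<Gamma>' :: nat and l i j :: nat
  assumes part_cover: "(\<Union>k\<in>{1..L}. T k) = {1..n}"
    and part_disj: "\<forall>k\<in>{1..L}. \<forall>k'\<in>{1..L}. k \<noteq> k' \<longrightarrow> T k \<inter> T k' = {}"
    and part_ne: "\<forall>k\<in>{1..L}. T k \<noteq> {}"
    and p_le: "\<forall>k\<in>{1..L}. p k \<le> card (T k)"
    and c_nonneg: "\<forall>k\<in>{1..n}. c k \<ge> 0"
    and d_nonneg: "\<forall>k\<in>{1..n}. d k \<ge> 0"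
    and l_in: "l \<in> {1..L}" and i_in: "i \<in> T l" and j_in: "j \<in> T l"
    and cij: "c i \<le> c j" and cdij: "c i + d i \<le> c j + d j"
  shows "\<exists>x \<in> feasX n L T p.
           (\<forall>x' \<in> feasX n L T p. regret_obj n L T p c d \<Gamma> \<Gamma>' x \<le> regret_obj n L T p c d \<Gamma> \<Gamma>' x')
           \<and> x i \<ge> x j"
proof -
  let ?X = "feasX n L T p" and ?F = "regret_obj n L T p c d \<Gamma> \<Gamma>'"
  have T_sub: "\<forall>k\<in>{1..L}. T k \<subseteq> {1..n}"
    using part_cover by blast
  obtain x where x: "x \<in> ?X" and x_opt: "\<forall>x' \<in> ?X. ?F x \<le> ?F x'"
    using feasX_has_minimizer[OF T_sub part_disj p_le] by blast
  show ?thesis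
  proof (cases "x j \<le> x i")
    case True
    with x x_opt show ?thesis by blast
  next
    case False
    have "i \<in> {1..n}" and "j \<in> {1..n}"
      using T_sub l_in i_in j_in by blast+
    moreover have "x \<in> binvecs n"
      using x feasX_subset_binvecs by blast
    ultimately have "x i = 0 \<or> x i = 1" and "x j = 0 \<or> x j = 1"
      using binvecs_01 by blast+
    with False have x_ij: "x i = 0" "x j = 1"
      by auto
    have "d j \<ge> 0"
      using d_nonneg \<open>j \<in> {1..n}\<close> by blast
    let ?x' = "x \<circ> transpose i j"
    have "?x' \<in> ?X"
      using feasX_comp_transpose[OF T_sub part_disj l_in i_in j_in x] .
    moreover have "?F ?x' \<le> ?F x"
      using regret_obj_transpose_le[OF T_sub part_disj l_in i_in j_in cij cdij \<open>d j \<ge> 0\<close> x x_ij] .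
    moreover have "?x' j \<le> ?x' i"
      using x_ij by simp
    ultimately show ?thesis
      using x_opt by (meson order_trans)
  qed
qed

end
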